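(* Let $\varphi$ be a GFG-QPTL formula, $\mathcal X\in\mathrm{HAsg}_\supseteq(\mathrm{free}(\varphi))$ and $\alpha$ an alternation flag. Then $\overline{\mathcal X}\models^{\bar\alpha}\varphi$ iff $\overline{\overline{\mathcal X}}\models^\alpha\varphi$ iff $\mathcal X\models^\alpha\varphi$.
   Context: Let $AP$ be a set of atomic propositions and $\mathbb B=\{\top,\bot\}$. A temporal valuation is a function $f:\mathbb N\to\mathbb B$. An assignment is a partial function $\chi:AP\rightharpoonup(\mathbb N\to\mathbb B)$; $\mathrm{Asg}$ is the set of all assignments, $\mathrm{Asg}(P)$ the set of assignments with domain exactly $P\subseteq AP$. For an assignment $\chi$, $p\in AP$ and a temporal valuation $f$, $\chi[p\mapsto f]$ is the assignment that agrees with $\chi$ except that it maps $p$ to $f$. A hyperassignment is a set $\mathcal X$ with $\emptyset\neq\mathcal X\subseteq 2^{\mathrm{Asg}(P)}$ and $\emptyset\notin\mathcal X$, for some $P\subseteq AP$; this $P$ is denoted $\mathrm{ap}(\mathcal X)$. $\mathrm{HAsg}$ is the set of all hyperassignments, $\mathrm{HAsg}(P)$ those with $\mathrm{ap}(\mathcal X)=P$, and $\mathrm{HAsg}_\supseteq(P)$ those with $\mathrm{ap}(\mathcal X)\supseteq P$. A choice function for $\mathcal X$ is a map $c:\mathcal X\to\mathrm{Asg}$ with $c(X)\in X$ for all $X\in\mathcal X$. The dual of $\mathcal X$ is $\overline{\mathcal X}=\{\mathrm{img}(c): c\text{ a choice function for }\mathcal X\}$. $\mathrm{par}(\mathcal X)$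 is the set of pairs $(\mathcal X_1,\mathcal X_2)$ of (possibly empty) subsets of $\mathcal X$ with $\mathcal X_1\cap\mathcal X_2=\emptyset$ and $\mathcal X_1\cup\mathcal X_2=\mathcal X$. A functor over $P\subseteq AP$ is a function $F:\mathrm{Asg}(P)\to(\mathbb N\to\mathbb B)$; $\mathrm{Fnc}(P)$ is the set of all of them. $\mathrm{ext}(\chi,F,p)=\chi[p\mapsto F(\chi)]$ and $\mathrm{ext}(X,F,p)=\{\mathrm{ext}(\chi,F,p):\chi\in X\}$. For $\chi_1,\chi_2\in\mathrm{Asg}(P)$, $p\in P$, $k\in\mathbb N$: $\chi_1\approx^{>k}_p\chi_2$ iff $\chi_1(q)=\chi_2(q)$ for all $q\in P\setminus\{p\}$ and $\chi_1(p)(t)=\chi_2(p)(t)$ for all $t\le k$; $\chi_1\approx^{\ge k}_p\chi_2$ is defined the same way with $t<k$ in place of $t\le k$. $F\in\mathrm{Fnc}(P)$ is behavioral (resp. strongly behavioral) w.r.t. $p\in P$ if $F(\chi_1)(k)=F(\chi_2)(k)$ for all $k\in\mathbb N$ and all $\chi_1,\chi_2$ with $\chi_1\approx^{>k}_p\chi_2$ (resp. $\chi_1\approx^{\ge k}_p\chi_2$). A quantifier specification is a pair $\sigma=\langle P_B,P_S\rangle$ of subsets of $AP$; $\mathrm{Fnc}_\sigma(P)$ is the set of $F\in\mathrm{Fnc}(P)$ that are behavioral w.r.t. every $p\in P_B\cap P$ and strongly behavioral w.r.t. every $p\in P_S\cap P$. $\mathrm{ext}_\sigma(\mathcal X,p)=\{\mathrm{ext}(X,F,p):X\in\mathcal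 X,\ F\in\mathrm{Fnc}_\sigma(\mathrm{ap}(\mathcal X))\}$. GFG-QPTL formulas are generated by $\varphi::=\psi\mid\neg\varphi\mid\varphi\wedge\varphi\mid\varphi\vee\varphi\mid\exists p{:}\sigma.\varphi\mid\forall p{:}\sigma.\varphi$, where $\psi$ is an LTL formula over $AP$, $p\in AP$ and $\sigma$ a quantifier specification; we also write $\exists^\sigma p.\varphi$, $\forall^\sigma p.\varphi$. QPTL formulas are those in which every specification is $\langle\emptyset,\emptyset\rangle$. $\mathrm{free}(\varphi)$ is the set of free propositions. $\chi\models_{LTL}\psi$ iff the infinite word whose $t$-th letter is the valuation $q\mapsto\chi(q)(t)$ satisfies $\psi$ in the standard LTL sense. Alternation flags are $\exists\forall$ and $\forall\exists$; $\bar\alpha$ is the flag different from $\alpha$. For a GFG-QPTL formula $\varphi$, $\mathcal X\in\mathrm{HAsg}_\supseteq(\mathrm{free}(\varphi))$ and flag $\alpha$, $\mathcal X\models^\alpha\varphi$ is defined inductively: (1) for LTL $\psi$: $\mathcal X\models^{\exists\forall}\psi$ iff there is $X\in\mathcal X$ with $\chi\models_{LTL}\psi$ for all $\chi\in X$; $\mathcal X\models^{\forall\exists}\psi$ iff for every $X\in\mathcal X$ there is $\chi\in X$ with $\chi\models_{LTL}\psi$; (2) $\mathcal X\models^\alpha\neg\phi$ iff not $\mathcal X\models^{\bar\alpha}\phi$; (3) $\mathcal X\models^{\exists\forall}\phi_1\wedge\phi_2$ iff for every $(\mathcal X_1,\mathcal X_2)\in\mathrm{par}(\mathcal X)$, either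 ($\mathcal X_1\ne\emptyset$ and $\mathcal X_1\models^{\exists\forall}\phi_1$) or ($\mathcal X_2\ne\emptyset$ and $\mathcal X_2\models^{\exists\forall}\phi_2$); $\mathcal X\models^{\forall\exists}\phi_1\wedge\phi_2$ iff $\overline{\mathcal X}\models^{\exists\forall}\phi_1\wedge\phi_2$; (4) $\mathcal X\models^{\forall\exists}\phi_1\vee\phi_2$ iff there is $(\mathcal X_1,\mathcal X_2)\in\mathrm{par}(\mathcal X)$ such that ($\mathcal X_1\neq\emptyset$ implies $\mathcal X_1\models^{\forall\exists}\phi_1$) and ($\mathcal X_2\neq\emptyset$ implies $\mathcal X_2\models^{\forall\exists}\phi_2$); $\mathcal X\models^{\exists\forall}\phi_1\vee\phi_2$ iff $\overline{\mathcal X}\models^{\forall\exists}\phi_1\vee\phi_2$; (5) $\mathcal X\models^{\exists\forall}\exists p{:}\sigma.\phi$ iff $\mathrm{ext}_\sigma(\mathcal X,p)\models^{\exists\forall}\phi$; $\mathcal X\models^{\forall\exists}\exists p{:}\sigma.\phi$ iff $\overline{\mathcal X}\models^{\exists\forall}\exists p{:}\sigma.\phi$; (6) $\mathcal X\models^{\forall\exists}\forall p{:}\sigma.\phi$ iff $\mathrm{ext}_\sigma(\mathcal X,p)\models^{\forall\exists}\phi$; $\mathcal X\models^{\exists\forall}\forall p{:}\sigma.\phi$ iff $\overline{\mathcal X}\models^{\forall\exists}\forall p{:}\sigma.\phi$. *)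

theory Defs
  imports Main
begin

text \<open>Atomic propositions are the elements of the type 'a (AP = UNIV).
  A temporal valuation is nat => bool; an assignment is a partial map.\<close>

type_synonym 'a asg = "'a \<rightharpoonup> (nat \<Rightarrow> bool)"

definition Asg :: "'a set \<Rightarrow> 'a asg set" where
  "Asg P = {\<chi>. dom \<chi> = P}"

definition is_hasg :: "'a asg set set \<Rightarrow> 'a set \<Rightarrow> bool" where
  "is_hasg \<X> P \<longleftrightarrow> \<X> \<noteq> {} \<and> \<X> \<subseteq> Pow (Asg P) \<and> {} \<notin> \<X>"

definition ap :: "'a asg set set \<Rightarrow> 'a set" where
  "ap \<X> = (THE P. is_hasg \<X> P)"

definition HAsg_sup :: "'a set \<Rightarrow> 'a asg set set set" where
  "HAsg_sup P = {\<X>. \<exists>Q. P \<subseteq> Q \<and> is_hasg \<X> Q}"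

definition dual :: "'a asg set set \<Rightarrow> 'a asg set set" where
  "dual \<X> = {c ` \<X> | c. \<forall>X\<in>\<X>. c X \<in> X}"

definition par :: "'b set \<Rightarrow> ('b set \<times> 'b set) set" where
  "par \<X> = {(X1, X2). X1 \<subseteq> \<X> \<and> X2 \<subseteq> \<X> \<and> X1 \<inter> X2 = {} \<and> X1 \<union> X2 = \<X>}"

text \<open>A functor over P is modelled as a total function on assignments; only its values on
  Asg P matter.\<close>

type_synonym 'a fnc = "'a asg \<Rightarrow> (nat \<Rightarrow> bool)"

definition ext_asg :: "'a asg \<Rightarrow> 'a fnc \<Rightarrow> 'a \<Rightarrow> 'a asg" where
  "ext_asg \<chi> F p = \<chi>(p \<mapsto> F \<chi>)"

definition ext_set :: "'a asg set \<Rightarrow> 'a fnc \<Rightarrow> 'a \<Rightarrow> 'a asg set" where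
  "ext_set X F p = (\<lambda>\<chi>. ext_asg \<chi> F p) ` X"

definition agree_gt :: "'a set \<Rightarrow> 'a \<Rightarrow> nat \<Rightarrow> 'a asg \<Rightarrow> 'a asg \<Rightarrow> bool" where
  "agree_gt P p k \<chi>1 \<chi>2 \<longleftrightarrow>
     (\<forall>q\<in>P - {p}. \<chi>1 q = \<chi>2 q) \<and> (\<forall>t\<le>k. the (\<chi>1 p) t = the (\<chi>2 p) t)"

definition agree_ge :: "'a set \<Rightarrow> 'a \<Rightarrow> nat \<Rightarrow> 'a asg \<Rightarrow> 'a asg \<Rightarrow> bool" where
  "agree_ge P p k \<chi>1 \<chi>2 \<longleftrightarrow>
     (\<forall>q\<in>P - {p}. \<chi>1 q = \<chi>2 q) \<and> (\<forall>t<k. the (\<chi>1 p) t = the (\<chi>2 p) t)"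

definition behavioral :: "'a set \<Rightarrow> 'a fnc \<Rightarrow> 'a \<Rightarrow> bool" where
  "behavioral P F p \<longleftrightarrow> (\<forall>k. \<forall>\<chi>1\<in>Asg P. \<forall>\<chi>2\<in>Asg P.
      agree_gt P p k \<chi>1 \<chi>2 \<longrightarrow> F \<chi>1 k = F \<chi>2 k)"

definition strongly_behavioral :: "'a set \<Rightarrow> 'a fnc \<Rightarrow> 'a \<Rightarrow> bool" where
  "strongly_behavioral P F p \<longleftrightarrow> (\<forall>k. \<forall>\<chi>1\<in>Asg P. \<forall>\<chi>2\<in>Asg P.
      agree_ge P p k \<chi>1 \<chi>2 \<longrightarrow> F \<chi>1 k = F \<chi>2 k)"

type_synonym 'a qspec = "'a set \<times> 'a set"

definition Fnc_sigma :: "'a qspec \<Rightarrow> 'a set \<Rightarrow> 'a fnc set" where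
  "Fnc_sigma \<sigma> P = {F. (\<forall>p\<in>fst \<sigma> \<inter> P. behavioral P F p)
                      \<and> (\<forall>p\<in>snd \<sigma> \<inter> P. strongly_behavioral P F p)}"

definition ext_sigma :: "'a qspec \<Rightarrow> 'a asg set set \<Rightarrow> 'a \<Rightarrow> 'a asg set set" where
  "ext_sigma \<sigma> \<X> p = {ext_set X F p | X F. X \<in> \<X> \<and> F \<in> Fnc_sigma \<sigma> (ap \<X>)}"

datatype 'a ltl =
    LTrue
  | LProp 'a
  | LNot "'a ltl"
  | LAnd "'a ltl" "'a ltl"
  | LOr "'a ltl" "'a ltl"
  | LNext "'a ltl"
  | LUntil "'a ltl" "'a ltl"

primrec ltl_holds :: "(nat \<Rightarrow> 'a \<Rightarrow> bool) \<Rightarrow> nat \<Rightarrow> 'a ltl \<Rightarrow> bool" where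
  "ltl_holds w i LTrue = True"
| "ltl_holds w i (LProp p) = w i p"
| "ltl_holds w i (LNot \<psi>) = (\<not> ltl_holds w i \<psi>)"
| "ltl_holds w i (LAnd \<psi>1 \<psi>2) = (ltl_holds w i \<psi>1 \<and> ltl_holds w i \<psi>2)"
| "ltl_holds w i (LOr \<psi>1 \<psi>2) = (ltl_holds w i \<psi>1 \<or> ltl_holds w i \<psi>2)"
| "ltl_holds w i (LNext \<psi>) = ltl_holds w (Suc i) \<psi>"
| "ltl_holds w i (LUntil \<psi>1 \<psi>2) =
     (\<exists>j\<ge>i. ltl_holds w j \<psi>2 \<and> (\<forall>k. i \<le> k \<and> k < j \<longrightarrow> ltl_holds w k \<psi>1))"

primrec ltl_atoms :: "'a ltl \<Rightarrow> 'a set" where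
  "ltl_atoms LTrue = {}"
| "ltl_atoms (LProp p) = {p}"
| "ltl_atoms (LNot \<psi>) = ltl_atoms \<psi>"
| "ltl_atoms (LAnd \<psi>1 \<psi>2) = ltl_atoms \<psi>1 \<union> ltl_atoms \<psi>2"
| "ltl_atoms (LOr \<psi>1 \<psi>2) = ltl_atoms \<psi>1 \<union> ltl_atoms \<psi>2"
| "ltl_atoms (LNext \<psi>) = ltl_atoms \<psi>"
| "ltl_atoms (LUntil \<psi>1 \<psi>2) = ltl_atoms \<psi>1 \<union> ltl_atoms \<psi>2"

definition word_of :: "'a asg \<Rightarrow> nat \<Rightarrow> 'a \<Rightarrow> bool" where
  "word_of \<chi> t q = (case \<chi> q of Some f \<Rightarrow> f t | None \<Rightarrow> False)"

definition models_LTL :: "'a asg \<Rightarrow> 'a ltl \<Rightarrow> bool" where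
  "models_LTL \<chi> \<psi> \<longleftrightarrow> ltl_holds (word_of \<chi>) 0 \<psi>"

datatype 'a gfg =
    GLTL "'a ltl"
  | GNeg "'a gfg"
  | GConj "'a gfg" "'a gfg"
  | GDisj "'a gfg" "'a gfg"
  | GEx 'a "'a qspec" "'a gfg"
  | GAll 'a "'a qspec" "'a gfg"

primrec free :: "'a gfg \<Rightarrow> 'a set" where
  "free (GLTL \<psi>) = ltl_atoms \<psi>"
| "free (GNeg \<phi>) = free \<phi>"
| "free (GConj \<phi>1 \<phi>2) = free \<phi>1 \<union> free \<phi>2"
| "free (GDisj \<phi>1 \<phi>2) = free \<phi>1 \<union> free \<phi>2"
| "free (GEx p \<sigma> \<phi>) = free \<phi> - {p}"
| "free (GAll p \<sigma> \<phi>) = free \<phi> - {p}"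

datatype flag = EA | AE

fun flip :: "flag \<Rightarrow> flag" where
  "flip EA = AE"
| "flip AE = EA"

text \<open>Semantics X |=^alpha phi.  The clauses that refer to the dual (same formula,
  other flag) are unfolded literally so that the recursion is structural.\<close>

primrec sat :: "'a gfg \<Rightarrow> flag \<Rightarrow> 'a asg set set \<Rightarrow> bool" where
  "sat (GLTL \<psi>) \<alpha> \<X> =
     (case \<alpha> of
        EA \<Rightarrow> (\<exists>X\<in>\<X>. \<forall>\<chi>\<in>X. models_LTL \<chi> \<psi>)
      | AE \<Rightarrow> (\<forall>X\<in>\<X>. \<exists>\<chi>\<in>X. models_LTL \<chi> \<psi>))"
| "sat (GNeg \<phi>) \<alpha> \<X> = (\<not> sat \<phi> (flip \<alpha>) \<X>)"
| "sat (GConj \<phi>1 \<phi>2) \<alpha> \<X> =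
     (let ea = (\<lambda>\<Y>. \<forall>(\<Y>1, \<Y>2)\<in>par \<Y>.
                  (\<Y>1 \<noteq> {} \<and> sat \<phi>1 EA \<Y>1) \<or> (\<Y>2 \<noteq> {} \<and> sat \<phi>2 EA \<Y>2))
      in case \<alpha> of EA \<Rightarrow> ea \<X> | AE \<Rightarrow> ea (dual \<X>))"
| "sat (GDisj \<phi>1 \<phi>2) \<alpha> \<X> =
     (let ae = (\<lambda>\<Y>. \<exists>(\<Y>1, \<Y>2)\<in>par \<Y>.
                  (\<Y>1 \<noteq> {} \<longrightarrow> sat \<phi>1 AE \<Y>1) \<and> (\<Y>2 \<noteq> {} \<longrightarrow> sat \<phi>2 AE \<Y>2))
      in case \<alpha> of AE \<Rightarrow> ae \<X> | EA \<Rightarrow> ae (dual \<X>))"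
| "sat (GEx p \<sigma> \<phi>) \<alpha> \<X> =
     (let ea = (\<lambda>\<Y>. sat \<phi> EA (ext_sigma \<sigma> \<Y> p))
      in case \<alpha> of EA \<Rightarrow> ea \<X> | AE \<Rightarrow> ea (dual \<X>))"
| "sat (GAll p \<sigma> \<phi>) \<alpha> \<X> =
     (let ae = (\<lambda>\<Y>. sat \<phi> AE (ext_sigma \<sigma> \<Y> p))
      in case \<alpha> of AE \<Rightarrow> ae \<X> | EA \<Rightarrow> ae (dual \<X>))"

end

theory Submission
  imports Defs
begin

text \<open>Say that \<open>\<X>\<close> refines \<open>\<Y>\<close> if every member of \<open>\<X>\<close> contains a member of \<open>\<Y>\<close>.
  By induction on the formula, \<open>\<exists>\<forall>\<close>-satisfaction is preserved from \<open>\<X>\<close> to \<open>\<Y>\<close> and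
  \<open>\<forall>\<exists>\<close>-satisfaction from \<open>\<Y>\<close> to \<open>\<X>\<close>: quantifiers only extend assignments member by
  member, partitions of \<open>\<Y>\<close> pull back to partitions of \<open>\<X>\<close>, and dualising reverses
  refinement. Since a hyperassignment and its double dual refine each other, satisfaction
  is invariant under double dualisation. Finally, dualising swaps the flag: for LTL formulas
  this is the exchange of \<open>\<exists>\<forall>\<close> and \<open>\<forall>\<exists>\<close> by choice functions, and every other clause
  with the swapped flag is defined through the dual, so it reduces to the double-dual
  invariance.\<close>

definition refines :: "'b set set \<Rightarrow> 'b set set \<Rightarrow> bool" where
  "refines \<X> \<Y> \<longleftrightarrow> (\<forall>X\<in>\<X>. \<exists>Y\<in>\<Y>. Y \<subseteq> X)"

lemma refines_nonempty: "refines \<X> \<Y> \<Longrightarrow> \<X> \<noteq> {} \<Longrightarrow> \<Y> \<noteq> {}"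
  unfolding refines_def by blast

lemma refines_bex_ball: "refines \<X> \<Y> \<Longrightarrow> \<exists>X\<in>\<X>. \<forall>\<chi>\<in>X. Q \<chi> \<Longrightarrow> \<exists>Y\<in>\<Y>. \<forall>\<chi>\<in>Y. Q \<chi>"
  unfolding refines_def by (meson subsetD)

lemma refines_ball_bex: "refines \<X> \<Y> \<Longrightarrow> \<forall>Y\<in>\<Y>. \<exists>\<chi>\<in>Y. Q \<chi> \<Longrightarrow> \<forall>X\<in>\<X>. \<exists>\<chi>\<in>X. Q \<chi>"
  unfolding refines_def by (meson subsetD)

lemma bex_dual_ball_iff: "(\<exists>T\<in>dual \<X>. \<forall>\<chi>\<in>T. Q \<chi>) \<longleftrightarrow> (\<forall>X\<in>\<X>. \<exists>\<chi>\<in>X. Q \<chi>)"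
proof
  assume "\<exists>T\<in>dual \<X>. \<forall>\<chi>\<in>T. Q \<chi>"
  then show "\<forall>X\<in>\<X>. \<exists>\<chi>\<in>X. Q \<chi>" unfolding dual_def by blast
next
  assume "\<forall>X\<in>\<X>. \<exists>\<chi>\<in>X. Q \<chi>"
  then obtain c where "\<forall>X\<in>\<X>. c X \<in> X \<and> Q (c X)" by metis
  then have "c ` \<X> \<in> dual \<X>" "\<forall>\<chi>\<in>c ` \<X>. Q \<chi>" unfolding dual_def by blast+
  then show "\<exists>T\<in>dual \<X>. \<forall>\<chi>\<in>T. Q \<chi>" by blast
qed

lemma ball_dual_bex_iff: "(\<forall>T\<in>dual \<X>. \<exists>\<chi>\<in>T. Q \<chi>) \<longleftrightarrow> (\<exists>X\<in>\<X>. \<forall>\<chi>\<in>X. Q \<chi>)"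
  using bex_dual_ball_iff[of \<X> "\<lambda>\<chi>. \<not> Q \<chi>"] by blast

lemma refines_dual:
  assumes "refines \<X> \<Y>"
  shows "refines (dual \<Y>) (dual \<X>)"
  unfolding refines_def
proof
  fix T assume "T \<in> dual \<Y>"
  then have "\<forall>X\<in>\<X>. \<exists>\<chi>\<in>X. \<chi> \<in> T" using assms unfolding refines_def dual_def by blast
  then show "\<exists>W\<in>dual \<X>. W \<subseteq> T"
    unfolding subset_eq bex_dual_ball_iff[where Q = "\<lambda>\<chi>. \<chi> \<in> T"] .
qed

lemma refines_dual_dual: "refines \<X> (dual (dual \<X>))"
  unfolding refines_def
proof
  fix X assume "X \<in> \<X>"
  then have "\<forall>T\<in>dual \<X>. \<exists>\<chi>\<in>T. \<chi> \<in> X" unfolding dual_def by blast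
  then show "\<exists>W\<in>dual (dual \<X>). W \<subseteq> X"
    unfolding subset_eq bex_dual_ball_iff[where Q = "\<lambda>\<chi>. \<chi> \<in> X"] .
qed

lemma dual_dual_refines: "refines (dual (dual \<X>)) \<X>"
  unfolding refines_def
proof
  fix Y assume "Y \<in> dual (dual \<X>)"
  then obtain e where "Y = e ` dual \<X>" "\<forall>T\<in>dual \<X>. e T \<in> T"
    unfolding dual_def by blast
  then have "\<forall>T\<in>dual \<X>. \<exists>\<chi>\<in>T. \<chi> \<in> Y" by blast
  then show "\<exists>X\<in>\<X>. X \<subseteq> Y"
    unfolding subset_eq ball_dual_bex_iff[where Q = "\<lambda>\<chi>. \<chi> \<in> Y"] .
qed

lemma ap_eq: "is_hasg \<X> P \<Longrightarrow> ap \<X> = P"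
  unfolding ap_def
proof (rule the_equality)
  fix Q assume "is_hasg \<X> P" "is_hasg \<X> Q"
  then obtain X \<chi> where "X \<in> \<X>" "\<chi> \<in> X" "X \<subseteq> Asg P" "X \<subseteq> Asg Q"
    unfolding is_hasg_def by (metis PowD all_not_in_conv subsetD)
  then show "Q = P" unfolding Asg_def by blast
qed

lemma is_hasg_subset: "is_hasg \<X> P \<Longrightarrow> \<Y> \<subseteq> \<X> \<Longrightarrow> \<Y> \<noteq> {} \<Longrightarrow> is_hasg \<Y> P"
  unfolding is_hasg_def by blast

lemma is_hasg_dual:
  assumes "is_hasg \<X> P"
  shows "is_hasg (dual \<X>) P"
proof -
  have "\<forall>X\<in>\<X>. \<exists>\<chi>\<in>X. True" using assms unfolding is_hasg_def by auto
  then have "\<exists>T\<in>dual \<X>. \<forall>\<chi>\<in>T. True" by (simp only: bex_dual_ball_iff)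
  moreover have "T \<subseteq> Asg P \<and> T \<noteq> {}" if "T \<in> dual \<X>" for T
    using that assms unfolding dual_def is_hasg_def by blast
  ultimately show ?thesis unfolding is_hasg_def by blast
qed

lemma is_hasg_ext_sigma:
  assumes "is_hasg \<X> P"
  shows "is_hasg (ext_sigma \<sigma> \<X> p) (insert p P)"
proof -
  obtain X where "X \<in> \<X>" using assms unfolding is_hasg_def by blast
  moreover have "(\<lambda>_ _. False) \<in> Fnc_sigma \<sigma> (ap \<X>)"
    unfolding Fnc_sigma_def behavioral_def strongly_behavioral_def by simp
  ultimately have "ext_set X (\<lambda>_ _. False) p \<in> ext_sigma \<sigma> \<X> p"
    unfolding ext_sigma_def by blast
  moreover have "T \<subseteq> Asg (insert p P) \<and> T \<noteq> {}" if T: "T \<in> ext_sigma \<sigma> \<X> p" for T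
  proof -
    obtain X F where "T = ext_set X F p" "X \<in> \<X>"
      using T unfolding ext_sigma_def by blast
    moreover from \<open>X \<in> \<X>\<close> have "X \<subseteq> Asg P" "X \<noteq> {}"
      using assms unfolding is_hasg_def by blast+
    ultimately show ?thesis
      unfolding ext_set_def ext_asg_def Asg_def by auto
  qed
  ultimately show ?thesis unfolding is_hasg_def by blast
qed

text \<open>The common proposition set matters: the admissible functors depend on \<open>ap\<close>.\<close>

lemma refines_ext_sigma:
  assumes "is_hasg \<X> P" "is_hasg \<Y> P" "refines \<X> \<Y>"
  shows "refines (ext_sigma \<sigma> \<X> p) (ext_sigma \<sigma> \<Y> p)"
  unfolding refines_def
proof
  fix T assume "T \<in> ext_sigma \<sigma> \<X> p"
  then obtain X F where T: "T = ext_set X F p" "X \<in> \<X>" "F \<in> Fnc_sigma \<sigma> (ap \<X>)"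
    unfolding ext_sigma_def by blast
  then obtain Y where "Y \<in> \<Y>" "Y \<subseteq> X" using assms(3) unfolding refines_def by blast
  moreover have "ap \<X> = ap \<Y>" using assms(1,2) by (simp add: ap_eq)
  ultimately have "ext_set Y F p \<in> ext_sigma \<sigma> \<Y> p" "ext_set Y F p \<subseteq> T"
    using T unfolding ext_sigma_def ext_set_def by auto
  then show "\<exists>W\<in>ext_sigma \<sigma> \<Y> p. W \<subseteq> T" by blast
qed

lemma par_refines:
  assumes "refines \<X> \<Y>" "(\<Y>1, \<Y>2) \<in> par \<Y>"
  obtains \<X>1 \<X>2 where "(\<X>1, \<X>2) \<in> par \<X>" "refines \<X>1 \<Y>1" "refines \<X>2 \<Y>2"
proof
  let ?\<X>1 = "{X\<in>\<X>. \<exists>Y\<in>\<Y>1. Y \<subseteq> X}"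
  show "(?\<X>1, \<X> - ?\<X>1) \<in> par \<X>" "refines ?\<X>1 \<Y>1"
    unfolding par_def refines_def by auto
  show "refines (\<X> - ?\<X>1) \<Y>2"
    using assms unfolding refines_def par_def by blast
qed

lemma par_sub: "(\<X>1, \<X>2) \<in> par \<X> \<Longrightarrow> \<X>1 \<subseteq> \<X> \<and> \<X>2 \<subseteq> \<X>"
  unfolding par_def by blast

lemma refines_all_par:
  assumes "refines \<X> \<Y>"
    and "\<forall>(\<X>1, \<X>2)\<in>par \<X>. (\<X>1 \<noteq> {} \<and> S1 \<X>1) \<or> (\<X>2 \<noteq> {} \<and> S2 \<X>2)"
    and mono1: "\<And>\<X>' \<Y>'. \<X>' \<subseteq> \<X> \<Longrightarrow> \<X>' \<noteq> {} \<Longrightarrow> \<Y>' \<subseteq> \<Y> \<Longrightarrow> refines \<X>' \<Y>' \<Longrightarrow>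
                 S1 \<X>' \<Longrightarrow> S1 \<Y>'"
    and mono2: "\<And>\<X>' \<Y>'. \<X>' \<subseteq> \<X> \<Longrightarrow> \<X>' \<noteq> {} \<Longrightarrow> \<Y>' \<subseteq> \<Y> \<Longrightarrow> refines \<X>' \<Y>' \<Longrightarrow>
                 S2 \<X>' \<Longrightarrow> S2 \<Y>'"
  shows "\<forall>(\<Y>1, \<Y>2)\<in>par \<Y>. (\<Y>1 \<noteq> {} \<and> S1 \<Y>1) \<or> (\<Y>2 \<noteq> {} \<and> S2 \<Y>2)"
proof clarify
  fix \<Y>1 \<Y>2 assume \<Y>: "(\<Y>1, \<Y>2) \<in> par \<Y>" and "\<not> (\<Y>2 \<noteq> {} \<and> S2 \<Y>2)"
  obtain \<X>1 \<X>2 where \<X>: "(\<X>1, \<X>2) \<in> par \<X>" "refines \<X>1 \<Y>1" "refines \<X>2 \<Y>2"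
    using par_refines[OF assms(1) \<Y>] .
  have sub: "\<X>1 \<subseteq> \<X>" "\<X>2 \<subseteq> \<X>" "\<Y>1 \<subseteq> \<Y>" "\<Y>2 \<subseteq> \<Y>"
    using par_sub \<X>(1) \<Y> by blast+
  from assms(2) \<X>(1) consider "\<X>1 \<noteq> {}" "S1 \<X>1" | "\<X>2 \<noteq> {}" "S2 \<X>2" by blast
  then show "\<Y>1 \<noteq> {} \<and> S1 \<Y>1"
  proof cases
    case 1
    then show ?thesis using mono1[OF sub(1) 1(1) sub(3) \<X>(2)] refines_nonempty[OF \<X>(2)] by blast
  next
    case 2
    then have "\<Y>2 \<noteq> {} \<and> S2 \<Y>2"
      using mono2[OF sub(2) 2(1) sub(4) \<X>(3)] refines_nonempty[OF \<X>(3)] by blast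
    with \<open>\<not> (\<Y>2 \<noteq> {} \<and> S2 \<Y>2)\<close> show ?thesis ..
  qed
qed

lemma refines_ex_par:
  assumes "refines \<X> \<Y>"
    and "\<exists>(\<Y>1, \<Y>2)\<in>par \<Y>. (\<Y>1 \<noteq> {} \<longrightarrow> S1 \<Y>1) \<and> (\<Y>2 \<noteq> {} \<longrightarrow> S2 \<Y>2)"
    and mono1: "\<And>\<X>' \<Y>'. \<X>' \<subseteq> \<X> \<Longrightarrow> \<X>' \<noteq> {} \<Longrightarrow> \<Y>' \<subseteq> \<Y> \<Longrightarrow> refines \<X>' \<Y>' \<Longrightarrow>
                 S1 \<Y>' \<Longrightarrow> S1 \<X>'"
    and mono2: "\<And>\<X>' \<Y>'. \<X>' \<subseteq> \<X> \<Longrightarrow> \<X>' \<noteq> {} \<Longrightarrow> \<Y>' \<subseteq> \<Y> \<Longrightarrow> refines \<X>' \<Y>' \<Longrightarrow>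
                 S2 \<Y>' \<Longrightarrow> S2 \<X>'"
  shows "\<exists>(\<X>1, \<X>2)\<in>par \<X>. (\<X>1 \<noteq> {} \<longrightarrow> S1 \<X>1) \<and> (\<X>2 \<noteq> {} \<longrightarrow> S2 \<X>2)"
proof -
  obtain \<Y>1 \<Y>2 where \<Y>: "(\<Y>1, \<Y>2) \<in> par \<Y>"
    and S: "\<Y>1 \<noteq> {} \<longrightarrow> S1 \<Y>1" "\<Y>2 \<noteq> {} \<longrightarrow> S2 \<Y>2"
    using assms(2) by blast
  obtain \<X>1 \<X>2 where \<X>: "(\<X>1, \<X>2) \<in> par \<X>" "refines \<X>1 \<Y>1" "refines \<X>2 \<Y>2"
    using par_refines[OF assms(1) \<Y>] .
  have sub: "\<X>1 \<subseteq> \<X>" "\<X>2 \<subseteq> \<X>" "\<Y>1 \<subseteq> \<Y>" "\<Y>2 \<subseteq> \<Y>"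
    using par_sub \<X>(1) \<Y> by blast+
  have "(\<X>1 \<noteq> {} \<longrightarrow> S1 \<X>1) \<and> (\<X>2 \<noteq> {} \<longrightarrow> S2 \<X>2)"
    using mono1[OF sub(1) _ sub(3) \<X>(2)] mono2[OF sub(2) _ sub(4) \<X>(3)] S
      refines_nonempty[OF \<X>(2)] refines_nonempty[OF \<X>(3)] by blast
  with \<X>(1) show ?thesis by blast
qed

lemma sat_refines_mono:
  assumes "is_hasg \<X> P" "is_hasg \<Y> P" "refines \<X> \<Y>"
  shows "(sat \<phi> EA \<X> \<longrightarrow> sat \<phi> EA \<Y>) \<and> (sat \<phi> AE \<Y> \<longrightarrow> sat \<phi> AE \<X>)"
  using assms
proof (induction \<phi> arbitrary: \<X> \<Y> P)
  case (GLTL \<psi>)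
  show ?case
    using refines_bex_ball[OF GLTL.prems(3), where Q = "\<lambda>\<chi>. models_LTL \<chi> \<psi>"]
      refines_ball_bex[OF GLTL.prems(3), where Q = "\<lambda>\<chi>. models_LTL \<chi> \<psi>"]
    by simp
next
  case (GNeg \<phi>)
  show ?case using GNeg.IH[OF GNeg.prems] by auto
next
  case (GConj \<phi>1 \<phi>2)
  let ?ea = "\<lambda>\<Y>. \<forall>(\<Y>1, \<Y>2)\<in>par \<Y>. (\<Y>1 \<noteq> {} \<and> sat \<phi>1 EA \<Y>1) \<or> (\<Y>2 \<noteq> {} \<and> sat \<phi>2 EA \<Y>2)"
  have ea: "?ea \<Y>" if hasg: "is_hasg \<X> P" "is_hasg \<Y> P"
    and refine: "refines \<X> \<Y>" and "?ea \<X>" for \<X> \<Y> P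
  proof -
    have IH: "(sat \<phi>1 EA \<X>' \<longrightarrow> sat \<phi>1 EA \<Y>') \<and> (sat \<phi>2 EA \<X>' \<longrightarrow> sat \<phi>2 EA \<Y>')"
      if "\<X>' \<subseteq> \<X>" "\<X>' \<noteq> {}" "\<Y>' \<subseteq> \<Y>" "refines \<X>' \<Y>'" for \<X>' \<Y>'
      using GConj.IH that(4) is_hasg_subset[OF hasg(1) that(1,2)]
        is_hasg_subset[OF hasg(2) that(3) refines_nonempty[OF that(4,2)]] by blast
    show ?thesis
      by (rule refines_all_par[OF refine \<open>?ea \<X>\<close>]) (use IH in blast)+
  qed
  show ?case
    unfolding sat.simps Let_def flag.case
    using ea[OF GConj.prems] ea[OF GConj.prems(2,1)[THEN is_hasg_dual] refines_dual[OF GConj.prems(3)]]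
    by blast
next
  case (GDisj \<phi>1 \<phi>2)
  let ?ae = "\<lambda>\<Y>. \<exists>(\<Y>1, \<Y>2)\<in>par \<Y>. (\<Y>1 \<noteq> {} \<longrightarrow> sat \<phi>1 AE \<Y>1) \<and> (\<Y>2 \<noteq> {} \<longrightarrow> sat \<phi>2 AE \<Y>2)"
  have ae: "?ae \<X>" if hasg: "is_hasg \<X> P" "is_hasg \<Y> P"
    and refine: "refines \<X> \<Y>" and "?ae \<Y>" for \<X> \<Y> P
  proof -
    have IH: "(sat \<phi>1 AE \<Y>' \<longrightarrow> sat \<phi>1 AE \<X>') \<and> (sat \<phi>2 AE \<Y>' \<longrightarrow> sat \<phi>2 AE \<X>')"
      if "\<X>' \<subseteq> \<X>" "\<X>' \<noteq> {}" "\<Y>' \<subseteq> \<Y>" "refines \<X>' \<Y>'" for \<X>' \<Y>'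
      using GDisj.IH that(4) is_hasg_subset[OF hasg(1) that(1,2)]
        is_hasg_subset[OF hasg(2) that(3) refines_nonempty[OF that(4,2)]] by blast
    show ?thesis
      by (rule refines_ex_par[OF refine \<open>?ae \<Y>\<close>]) (use IH in blast)+
  qed
  show ?case
    unfolding sat.simps Let_def flag.case
    using ae[OF GDisj.prems] ae[OF GDisj.prems(2,1)[THEN is_hasg_dual] refines_dual[OF GDisj.prems(3)]]
    by blast
next
  case (GEx p \<sigma> \<phi>)
  have ea: "sat \<phi> EA (ext_sigma \<sigma> \<X> p) \<Longrightarrow> sat \<phi> EA (ext_sigma \<sigma> \<Y> p)"
    if "is_hasg \<X> P" "is_hasg \<Y> P" "refines \<X> \<Y>" for \<X> \<Y> P
    using GEx.IH[OF that(1,2)[THEN is_hasg_ext_sigma] refines_ext_sigma[OF that]] by blast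
  show ?case
    unfolding sat.simps Let_def flag.case
    using ea[OF GEx.prems] ea[OF GEx.prems(2,1)[THEN is_hasg_dual] refines_dual[OF GEx.prems(3)]]
    by blast
next
  case (GAll p \<sigma> \<phi>)
  have ae: "sat \<phi> AE (ext_sigma \<sigma> \<Y> p) \<Longrightarrow> sat \<phi> AE (ext_sigma \<sigma> \<X> p)"
    if "is_hasg \<X> P" "is_hasg \<Y> P" "refines \<X> \<Y>" for \<X> \<Y> P
    using GAll.IH[OF that(1,2)[THEN is_hasg_ext_sigma] refines_ext_sigma[OF that]] by blast
  show ?case
    unfolding sat.simps Let_def flag.case
    using ae[OF GAll.prems] ae[OF GAll.prems(2,1)[THEN is_hasg_dual] refines_dual[OF GAll.prems(3)]]
    by blast
qed

lemma sat_dual_dual: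
  assumes "is_hasg \<X> P"
  shows "sat \<phi> \<alpha> (dual (dual \<X>)) \<longleftrightarrow> sat \<phi> \<alpha> \<X>"
proof -
  have "is_hasg (dual (dual \<X>)) P" using assms by (intro is_hasg_dual)
  then show ?thesis
    using sat_refines_mono[OF assms _ refines_dual_dual] sat_refines_mono[OF _ assms dual_dual_refines]
    by (cases \<alpha>) blast+
qed

lemma flip_flip [simp]: "flip (flip \<alpha>) = \<alpha>"
  by (cases \<alpha>) simp_all

lemma sat_flip_dual:
  assumes "is_hasg \<X> P"
  shows "sat \<phi> (flip \<alpha>) (dual \<X>) \<longleftrightarrow> sat \<phi> \<alpha> \<X>"
  using assms
proof (induction \<phi> arbitrary: \<alpha> \<X> P)
  case (GLTL \<psi>)
  show ?case by (cases \<alpha>) (simp_all add: ball_dual_bex_iff bex_dual_ball_iff)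
next
  case (GNeg \<phi>)
  show ?case using GNeg.IH[OF GNeg.prems, of "flip \<alpha>"] by simp
next
  case (GConj \<phi>1 \<phi>2)
  show ?case using sat_dual_dual[OF GConj.prems, of "GConj \<phi>1 \<phi>2" EA] by (cases \<alpha>) simp_all
next
  case (GDisj \<phi>1 \<phi>2)
  show ?case using sat_dual_dual[OF GDisj.prems, of "GDisj \<phi>1 \<phi>2" AE] by (cases \<alpha>) simp_all
next
  case (GEx p \<sigma> \<phi>)
  show ?case using sat_dual_dual[OF GEx.prems, of "GEx p \<sigma> \<phi>" EA] by (cases \<alpha>) simp_all
next
  case (GAll p \<sigma> \<phi>)
  show ?case using sat_dual_dual[OF GAll.prems, of "GAll p \<sigma> \<phi>" AE] by (cases \<alpha>) simp_all
qed

theorem mainTheorem9: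
  fixes \<phi> :: "'a gfg" and \<X> :: "'a asg set set" and \<alpha> :: flag
  assumes "\<X> \<in> HAsg_sup (free \<phi>)"
  shows "(sat \<phi> (flip \<alpha>) (dual \<X>) \<longleftrightarrow> sat \<phi> \<alpha> (dual (dual \<X>)))
       \<and> (sat \<phi> \<alpha> (dual (dual \<X>)) \<longleftrightarrow> sat \<phi> \<alpha> \<X>)"
proof -
  obtain P where "is_hasg \<X> P" using assms unfolding HAsg_sup_def by blast
  then show ?thesis using sat_flip_dual sat_dual_dual by blast
qed

end
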